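(* Let $p$ and $s$ be distinct odd primes and $n$ a positive integer with $p\equiv1\pmod n$. Let $g$ be a primitive root modulo $p$, $\zeta$ a primitive $p$-th root of unity in $\overline{\mathbb{F}}_s$, and $G(p,n)=\langle a,b\mid a^p=1=b^{(p-1)/n},\ b^{-1}ab=a^{g^n}\rangle$. Let $\rho:\langle a\rangle\to\overline{\mathbb{F}}_s^*$ be given by $\rho(a)=\zeta$. Then the induced representation $\rho^{G(p,n)}$ is realizable over $\mathbb{F}_s$ if and only if $s$ is an $n$-th power in $\mathbb{F}_p$ (i.e. $s\equiv y^n\pmod p$ for some integer $y$).
   Context: A representation over $\overline{\mathbb{F}}_s$ is realizable over $\mathbb{F}_s$ if it is equivalent (over $\overline{\mathbb{F}}_s$) to a matrix representation with all entries in $\mathbb{F}_s$. Concretely, with $N=(p-1)/n$, $\rho^{G(p,n)}$ acts on a space with basis $e_0,\dots,e_{N-1}$ by $ae_i=\zeta^{g^{ni}}e_i$, $be_i=e_{i+1}$ (indices modulo $N$). *)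

theory Defs
  imports "HOL-Number_Theory.Number_Theory" "HOL-Algebra.Algebraic_Closure_Type"
    "Jordan_Normal_Form.Matrix" "Berlekamp_Zassenhaus.Finite_Field"
begin

text \<open>The prime field F_s is the type 's mod_ring (with CARD('s) = s prime);
its algebraic closure is 's mod_ring alg_closure, and F_s sits inside it as
the image of the canonical embedding to_ac.\<close>

definition prime_subfield :: "('s::prime_card mod_ring) alg_closure set" where
  "prime_subfield = range to_ac"

text \<open>Concrete matrices of the induced representation on basis e_0..e_(N-1),
N = (p-1)/n:  a e_i = zeta^(g^(n i)) e_i,  b e_i = e_(i+1 mod N).\<close>

definition ind_a :: "nat \<Rightarrow> nat \<Rightarrow> nat \<Rightarrow> 'k::field \<Rightarrow> 'k mat" where
  "ind_a p n g \<zeta> = (let N = (p - 1) div n in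
     mat N N (\<lambda>(i, j). if i = j then \<zeta> ^ (g ^ (n * j)) else 0))"

definition ind_b :: "nat \<Rightarrow> nat \<Rightarrow> 'k::field mat" where
  "ind_b p n = (let N = (p - 1) div n in
     mat N N (\<lambda>(i, j). if i = (j + 1) mod N then 1 else 0))"

text \<open>The induced representation, evaluated on the element a^i b^j of G(p,n)
(every element of G(p,n) has this form with i < p, j < N).\<close>

definition ind_rep :: "nat \<Rightarrow> nat \<Rightarrow> nat \<Rightarrow> 'k::field \<Rightarrow> nat \<times> nat \<Rightarrow> 'k mat" where
  "ind_rep p n g \<zeta> = (\<lambda>(i, j). (ind_a p n g \<zeta> ^\<^sub>m i) * (ind_b p n ^\<^sub>m j))"

definition G_elems :: "nat \<Rightarrow> nat \<Rightarrow> (nat \<times> nat) set" where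
  "G_elems p n = {..<p} \<times> {..<(p - 1) div n}"

definition realizable_over :: "'k::field set \<Rightarrow> nat \<Rightarrow> ('g \<Rightarrow> 'k mat) \<Rightarrow> 'g set \<Rightarrow> bool" where
  "realizable_over K d R Gs =
     (\<exists>P Q. P \<in> carrier_mat d d \<and> Q \<in> carrier_mat d d \<and> P * Q = 1\<^sub>m d \<and> Q * P = 1\<^sub>m d \<and>
        (\<forall>x\<in>Gs. \<forall>i<d. \<forall>j<d. (P * R x * Q) $$ (i, j) \<in> K))"

end

theory Submission
  imports Defs "Jordan_Normal_Form.Determinant"
begin

(*
  Put N = (p - 1)/n and z_k = zeta^(g^(n k)) for k < N.  The z_k are pairwise distinct,
  and a^i b^j acts by the monomial matrix with entries z_k^i placed along the cyclic
  shift by j.  Both directions are driven by the Frobenius x |-> x^s of the algebraic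
  closure of F_s, whose fixed points are exactly F_s, and which sends z_k to
  zeta^(s g^(n k)).

  (=>) If P R Q has all entries in F_s (Q = P^-1), the trace of R(a^i) is Frobenius-fixed:
  sum_k z_k^(s i) = sum_k z_k^i for all i < p.  Pairing both sides with the character
  i |-> zeta^(-i) counts the k with s g^(n k) = 1 resp. g^(n k) = 1 (mod p).  The second
  count is 1 and p is invertible in F_s, so s = g^(-n k) is an n-th power modulo p.

  (<=) If s = g^(n m) (mod p), the Frobenius permutes the z_k by the shift k |-> k + m.
  For the Vandermonde matrix V = (z_k^t) this gives Frob(V) = S V and
  Frob(R x) = S (R x) S^-1 with S the corresponding permutation matrix, so V^-1 (R x) V
  is Frobenius-fixed, i.e. defined over F_s.
*)


lemma if_zero_mult: "(if P then a else 0) * (b::'a::semiring_0) = (if P then a * b else 0)"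
  by simp

lemma mult_if_zero: "(a::'a::semiring_0) * (if P then b else 0) = (if P then a * b else 0)"
  by simp

lemma diag_mat_pow:
  "(mat N N (\<lambda>(i, j). if i = j then d j else (0::'a::comm_semiring_1))) ^\<^sub>m m
   = mat N N (\<lambda>(i, j). if i = j then d j ^ m else 0)"
proof (induction m)
  case 0
  then show ?case by (auto intro!: eq_matI)
next
  case (Suc m)
  show ?case unfolding pow_mat.simps Suc
    by (rule eq_matI)
      (auto simp: scalar_prod_def if_zero_mult mult_if_zero sum.delta sum.delta' mult.commute)
qed

lemma shift_mat_pow:
  assumes "N > 0"
  shows "(mat N N (\<lambda>(i, j). if i = (j + 1) mod N then 1 else (0::'a::comm_semiring_1))) ^\<^sub>m m
   = mat N N (\<lambda>(i, j). if i = (j + m) mod N then 1 else 0)"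
proof (induction m)
  case 0
  then show ?case using assms by (auto intro!: eq_matI)
next
  case (Suc m)
  have "(\<Sum>c = 0..<N. (if i = (c + m) mod N then 1 else 0) * (if c = (j + 1) mod N then 1 else (0::'a)))
      = (if i = (j + Suc m) mod N then 1 else 0)" for i j
  proof -
    have "(\<Sum>c = 0..<N. (if i = (c + m) mod N then 1 else 0) * (if c = (j + 1) mod N then 1 else (0::'a)))
        = (\<Sum>c = 0..<N. if c = (j + 1) mod N then (if i = (c + m) mod N then 1 else 0) else 0)"
      by (rule sum.cong) auto
    also have "\<dots> = (if i = ((j + 1) mod N + m) mod N then 1 else 0)"
      using assms by (simp add: sum.delta)
    finally show ?thesis by (simp add: mod_add_left_eq)
  qed
  then show ?case unfolding pow_mat.simps Suc
    by (intro eq_matI) (simp_all add: scalar_prod_def)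
qed

lemma ind_rep_explicit:
  fixes \<zeta> :: "'k::field"
  assumes "(p - 1) div n > 0"
  shows "ind_rep p n g \<zeta> (i, j) = mat ((p - 1) div n) ((p - 1) div n)
     (\<lambda>(a, b). if a = (b + j) mod ((p - 1) div n) then (\<zeta> ^ (g ^ (n * a))) ^ i else 0)"
proof -
  define N where "N = (p - 1) div n"
  have A: "ind_a p n g \<zeta> = mat N N (\<lambda>(i, j). if i = j then \<zeta> ^ (g ^ (n * j)) else 0)"
    unfolding ind_a_def N_def Let_def by simp
  have B: "ind_b p n = mat N N (\<lambda>(i, j). if i = (j + 1) mod N then 1 else (0::'k))"
    unfolding ind_b_def N_def Let_def by simp
  show ?thesis
    unfolding ind_rep_def split N_def[symmetric] A B diag_mat_pow shift_mat_pow[OF assms[folded N_def]]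
    by (rule eq_matI) (auto simp: scalar_prod_def if_zero_mult mult_if_zero sum.delta sum.delta')
qed


definition mat_trace :: "'a::comm_ring_1 mat \<Rightarrow> 'a" where
  "mat_trace A = (\<Sum>i<dim_row A. A $$ (i, i))"

lemma mat_trace_comm:
  fixes A B :: "'a::comm_ring_1 mat"
  assumes "A \<in> carrier_mat n m" "B \<in> carrier_mat m n"
  shows "mat_trace (A * B) = mat_trace (B * A)"
proof -
  have "mat_trace (A * B) = (\<Sum>i<n. \<Sum>k<m. A $$ (i, k) * B $$ (k, i))"
    using assms unfolding mat_trace_def
    by (intro sum.cong) (auto simp: scalar_prod_def atLeast0LessThan)
  also have "\<dots> = (\<Sum>k<m. \<Sum>i<n. B $$ (k, i) * A $$ (i, k))"
    by (subst sum.swap) (intro sum.cong refl mult.commute)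
  also have "\<dots> = mat_trace (B * A)"
    using assms unfolding mat_trace_def
    by (intro sum.cong) (auto simp: scalar_prod_def atLeast0LessThan)
  finally show ?thesis .
qed

lemma mat_trace_conj:
  fixes A P Q :: "'a::comm_ring_1 mat"
  assumes "A \<in> carrier_mat N N" "P \<in> carrier_mat N N" "Q \<in> carrier_mat N N" "Q * P = 1\<^sub>m N"
  shows "mat_trace (P * A * Q) = mat_trace A"
proof -
  have "mat_trace (P * A * Q) = mat_trace (Q * (P * A))"
    using assms by (intro mat_trace_comm) auto
  also have "Q * (P * A) = A"
    using assms by (simp flip: assoc_mult_mat[of Q N N P N A N])
  finally show ?thesis .
qed


definition perm_rows :: "nat \<Rightarrow> (nat \<Rightarrow> nat) \<Rightarrow> 'a::semiring_1 mat" where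
  "perm_rows N \<sigma> = mat N N (\<lambda>(a, b). if b = \<sigma> a then 1 else 0)"

definition perm_cols :: "nat \<Rightarrow> (nat \<Rightarrow> nat) \<Rightarrow> 'a::semiring_1 mat" where
  "perm_cols N \<sigma> = mat N N (\<lambda>(a, b). if a = \<sigma> b then 1 else 0)"

lemma perm_rows_carrier [simp]: "perm_rows N \<sigma> \<in> carrier_mat N N"
  and perm_cols_carrier [simp]: "perm_cols N \<sigma> \<in> carrier_mat N N"
  unfolding perm_rows_def perm_cols_def by auto

lemma perm_rows_mult:
  fixes M :: "'a::semiring_1 mat"
  assumes "M \<in> carrier_mat N c" "\<And>a. a < N \<Longrightarrow> \<sigma> a < N"
  shows "perm_rows N \<sigma> * M = mat N c (\<lambda>(a, b). M $$ (\<sigma> a, b))"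
proof (rule eq_matI)
  fix a b assume "a < dim_row (mat N c (\<lambda>(a, b). M $$ (\<sigma> a, b)))"
    "b < dim_col (mat N c (\<lambda>(a, b). M $$ (\<sigma> a, b)))"
  then have ab: "a < N" "b < c" by auto
  have "(perm_rows N \<sigma> * M) $$ (a, b) = (\<Sum>k = 0..<N. if k = \<sigma> a then M $$ (k, b) else 0)"
    using assms(1) ab by (simp add: perm_rows_def scalar_prod_def if_zero_mult)
  also have "\<dots> = M $$ (\<sigma> a, b)" using assms(2)[OF ab(1)] by (simp add: sum.delta)
  finally show "(perm_rows N \<sigma> * M) $$ (a, b) = mat N c (\<lambda>(a, b). M $$ (\<sigma> a, b)) $$ (a, b)"
    using ab by simp
qed (use assms in \<open>auto simp: perm_rows_def\<close>)

lemma mult_perm_cols: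
  fixes M :: "'a::semiring_1 mat"
  assumes "M \<in> carrier_mat r N" "\<And>a. a < N \<Longrightarrow> \<sigma> a < N"
  shows "M * perm_cols N \<sigma> = mat r N (\<lambda>(a, b). M $$ (a, \<sigma> b))"
proof (rule eq_matI)
  fix a b assume "a < dim_row (mat r N (\<lambda>(a, b). M $$ (a, \<sigma> b)))"
    "b < dim_col (mat r N (\<lambda>(a, b). M $$ (a, \<sigma> b)))"
  then have ab: "a < r" "b < N" by auto
  have "(M * perm_cols N \<sigma>) $$ (a, b) = (\<Sum>k = 0..<N. if k = \<sigma> b then M $$ (a, k) else 0)"
    using assms(1) ab by (simp add: perm_cols_def scalar_prod_def mult_if_zero)
  also have "\<dots> = M $$ (a, \<sigma> b)" using assms(2)[OF ab(2)] by (simp add: sum.delta)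
  finally show "(M * perm_cols N \<sigma>) $$ (a, b) = mat r N (\<lambda>(a, b). M $$ (a, \<sigma> b)) $$ (a, b)"
    using ab by simp
qed (use assms in \<open>auto simp: perm_cols_def\<close>)

lemma perm_rows_cols_inverse:
  assumes maps: "\<And>a. a < N \<Longrightarrow> \<sigma> a < N" and inj: "inj_on \<sigma> {..<N}"
  shows "perm_rows N \<sigma> * perm_cols N \<sigma> = (1\<^sub>m N :: 'a::field mat)"
    and "perm_cols N \<sigma> * perm_rows N \<sigma> = (1\<^sub>m N :: 'a mat)"
proof -
  have eq: "\<sigma> a = \<sigma> b \<longleftrightarrow> a = b" if "a < N" "b < N" for a b
    using inj that by (auto dest: inj_onD)
  show inv: "perm_rows N \<sigma> * perm_cols N \<sigma> = (1\<^sub>m N :: 'a mat)"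
    by (subst perm_rows_mult[OF perm_cols_carrier maps])
      (auto intro!: eq_matI simp: perm_cols_def maps eq)
  show "perm_cols N \<sigma> * perm_rows N \<sigma> = (1\<^sub>m N :: 'a mat)"
    by (rule mat_mult_left_right_inverse[OF _ _ inv]) auto
qed


lemma coeffs_zero_if_many_roots:
  fixes v :: "nat \<Rightarrow> 'a::idom" and x :: "nat \<Rightarrow> 'a"
  assumes inj: "inj_on x {..<N}" and roots: "\<And>k. k < N \<Longrightarrow> (\<Sum>t<N. v t * x k ^ t) = 0"
  shows "t < N \<Longrightarrow> v t = 0"
proof (rule ccontr)
  assume "t < N" "v t \<noteq> 0"
  define f :: "'a poly" where "f = (\<Sum>t<N. Polynomial.monom (v t) t)"
  have "Polynomial.coeff f t = v t"
    using \<open>t < N\<close> by (simp add: f_def coeff_sum coeff_monom sum.delta')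
  then have f0: "f \<noteq> 0" using \<open>v t \<noteq> 0\<close> by auto
  have "Polynomial.degree f \<le> N - 1"
    by (rule degree_le) (auto simp: f_def coeff_sum coeff_monom sum.delta)
  moreover have "x ` {..<N} \<subseteq> {y. poly f y = 0}"
    using roots by (auto simp: f_def poly_sum poly_monom)
  then have "card (x ` {..<N}) \<le> card {y. poly f y = 0}"
    by (rule card_mono[OF poly_roots_finite[OF f0]])
  moreover have "card {y. poly f y = 0} \<le> Polynomial.degree f"
    by (rule card_poly_roots_bound[OF f0])
  ultimately show False
    using \<open>t < N\<close> card_image[OF inj] by simp
qed

lemma vandermonde_invertible:
  fixes x :: "nat \<Rightarrow> 'a::field"
  assumes inj: "inj_on x {..<N}"
  shows "\<exists>W. W \<in> carrier_mat N N \<and> W * mat N N (\<lambda>(k, t). x k ^ t) = 1\<^sub>m N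
           \<and> mat N N (\<lambda>(k, t). x k ^ t) * W = 1\<^sub>m N"
proof -
  define V where "V = mat N N (\<lambda>(k, t). x k ^ t)"
  have V: "V \<in> carrier_mat N N" unfolding V_def by simp
  have "det V \<noteq> 0"
  proof
    assume "det V = 0"
    then obtain v where v: "v \<in> carrier_vec N" "v \<noteq> 0\<^sub>v N" "V *\<^sub>v v = 0\<^sub>v N"
      using det_0_iff_vec_prod_zero_field[OF V] by blast
    have "(\<Sum>t<N. v $ t * x k ^ t) = 0" if "k < N" for k
    proof -
      have "(V *\<^sub>v v) $ k = (\<Sum>t<N. x k ^ t * v $ t)"
        using that v(1) by (simp add: V_def scalar_prod_def atLeast0LessThan)
      then show ?thesis using v(3) that by (simp add: mult.commute)
    qed
    then have "v $ t = 0" if "t < N" for t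
      using coeffs_zero_if_many_roots[OF inj, of "\<lambda>t. v $ t"] that by blast
    then have "v = 0\<^sub>v N" using v(1) by (intro eq_vecI) auto
    with v(2) show False by simp
  qed
  then have "V \<in> Units (ring_mat TYPE('a) N ())"
    by (rule det_non_zero_imp_unit[OF V])
  then show ?thesis unfolding V_def[symmetric] by (auto simp: Units_def ring_mat_def)
qed


lemma root_pow_mod:
  fixes \<zeta> :: "'a::monoid_mult"
  assumes "\<zeta> ^ p = 1"
  shows "\<zeta> ^ x = \<zeta> ^ (x mod p)"
proof -
  have "\<zeta> ^ x = (\<zeta> ^ p) ^ (x div p) * \<zeta> ^ (x mod p)"
    by (simp flip: power_mult power_add)
  then show ?thesis using assms by simp
qed

lemma primitive_root_pow_eq_iff:
  fixes \<zeta> :: "'a::field"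
  assumes "\<zeta> ^ p = 1" "\<forall>k. 0 < k \<and> k < p \<longrightarrow> \<zeta> ^ k \<noteq> 1" "p > 0"
  shows "\<zeta> ^ x = \<zeta> ^ y \<longleftrightarrow> x mod p = y mod p"
proof
  assume "x mod p = y mod p"
  then show "\<zeta> ^ x = \<zeta> ^ y" using root_pow_mod[OF assms(1)] by metis
next
  have nz: "\<zeta> \<noteq> 0" using assms(1,3) by (metis power_0_left zero_neq_one not_gr0)
  have ne: "\<zeta> ^ u \<noteq> \<zeta> ^ v" if "u < v" "v < p" for u v
  proof
    assume "\<zeta> ^ u = \<zeta> ^ v"
    moreover have "\<zeta> ^ v = \<zeta> ^ u * \<zeta> ^ (v - u)"
      using that(1) by (simp flip: power_add)
    ultimately have "\<zeta> ^ (v - u) = 1" using nz by simp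
    then show False using assms(2) that by auto
  qed
  assume "\<zeta> ^ x = \<zeta> ^ y"
  then have "\<zeta> ^ (x mod p) = \<zeta> ^ (y mod p)" using root_pow_mod[OF assms(1)] by metis
  moreover have "x mod p < p" "y mod p < p" using assms(3) by auto
  ultimately show "x mod p = y mod p"
    using ne[of "x mod p" "y mod p"] ne[of "y mod p" "x mod p"] by (metis linorder_neqE_nat)
qed

lemma primitive_root_geometric_sum:
  fixes \<zeta> :: "'a::field"
  assumes "\<zeta> ^ p = 1" "\<forall>k. 0 < k \<and> k < p \<longrightarrow> \<zeta> ^ k \<noteq> 1" "p > 0"
  shows "(\<Sum>i<p. (\<zeta> ^ e) ^ i) = (if p dvd e then of_nat p else 0)"
proof (cases "p dvd e")
  case True
  then have "\<zeta> ^ e = 1" using root_pow_mod[OF assms(1), of e] by simp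
  then show ?thesis using True by simp
next
  case False
  then have "\<zeta> ^ e \<noteq> 1"
    using primitive_root_pow_eq_iff[OF assms, of e 0] by (simp add: dvd_eq_mod_eq_0)
  moreover have "(\<zeta> ^ e) ^ p = 1"
    using assms(1) by (metis mult.commute power_mult power_one)
  ultimately show ?thesis using False by (simp add: sum_gp_strict)
qed

lemma dvd_add_pred_iff_cong:
  assumes "(p::nat) > 0"
  shows "p dvd x + (p - 1) \<longleftrightarrow> [x = 1] (mod p)"
proof -
  have "p dvd x + (p - 1) \<longleftrightarrow> [x + (p - 1) = 1 + (p - 1)] (mod p)"
    using assms by (simp add: cong_def dvd_eq_mod_eq_0)
  also have "\<dots> \<longleftrightarrow> [x = 1] (mod p)" by (rule cong_add_rcancel_nat)
  finally show ?thesis .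
qed

(* Fourier inversion at the character i |-> zeta^(-i): pairing the power sums of the
   roots zeta^(e a) with zeta^(-i) = zeta^((p-1) i) counts the exponents e a = 1 (mod p). *)
lemma primitive_root_fourier_count:
  fixes \<zeta> :: "'a::field"
  assumes "\<zeta> ^ p = 1" "\<forall>k. 0 < k \<and> k < p \<longrightarrow> \<zeta> ^ k \<noteq> 1" "p > 0" "finite A"
  shows "(\<Sum>i<p. (\<zeta> ^ (p - 1)) ^ i * (\<Sum>a\<in>A. (\<zeta> ^ e a) ^ i))
       = of_nat (card {a\<in>A. [e a = 1] (mod p)}) * of_nat p"
proof -
  have exponent_add: "(\<zeta> ^ (p - 1)) ^ i * (\<zeta> ^ x) ^ i = (\<zeta> ^ (x + (p - 1))) ^ i" for i x
    by (simp only: power_add power_mult_distrib mult.commute)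
  have "(\<Sum>i<p. (\<zeta> ^ (p - 1)) ^ i * (\<Sum>a\<in>A. (\<zeta> ^ e a) ^ i))
      = (\<Sum>i<p. \<Sum>a\<in>A. (\<zeta> ^ (e a + (p - 1))) ^ i)"
    by (simp only: sum_distrib_left exponent_add)
  also have "\<dots> = (\<Sum>a\<in>A. \<Sum>i<p. (\<zeta> ^ (e a + (p - 1))) ^ i)"
    by (rule sum.swap)
  also have "\<dots> = (\<Sum>a\<in>A. if [e a = 1] (mod p) then of_nat p else 0)"
    by (intro sum.cong refl)
      (simp only: primitive_root_geometric_sum[OF assms(1-3)] dvd_add_pred_iff_cong[OF assms(3)])
  also have "\<dots> = of_nat (card {a\<in>A. [e a = 1] (mod p)}) * of_nat p"
    using assms(4) by (simp flip: sum.inter_filter)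
  finally show ?thesis .
qed


definition frob :: "'s::prime_card mod_ring alg_closure \<Rightarrow> 's mod_ring alg_closure" where
  "frob x = x ^ CARD('s)"

lemma frob_hom: "semiring_hom (frob :: 's::prime_card mod_ring alg_closure \<Rightarrow> _)"
proof
  show "frob (0::'s mod_ring alg_closure) = 0" "frob (1::'s mod_ring alg_closure) = 1"
    by (simp_all add: frob_def)
  show "frob (x * y) = frob x * frob y" for x y :: "'s mod_ring alg_closure"
    by (simp add: frob_def power_mult_distrib)
  show "frob (x + y) = frob x + frob y" for x y :: "'s mod_ring alg_closure"
    unfolding frob_def by (rule freshmans_dream) (auto simp: prime_card)
qed

lemma frob_sum: "frob (sum f A) = (\<Sum>x\<in>A. frob (f x))"
  unfolding frob_def by (rule freshmans_dream_sum) (auto simp: prime_card)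

lemma frob_prime_subfield:
  fixes x :: "'s::prime_card mod_ring alg_closure"
  shows "x \<in> prime_subfield \<Longrightarrow> frob x = x"
  unfolding prime_subfield_def frob_def
  using finite_field_power_card_eq_same[where 'a="'s mod_ring"]
  by (auto simp flip: to_ac_power)

(* Conversely, the prime subfield is the whole fixed field of the Frobenius: it already
   consists of s roots of x^s - x, which has no more roots. *)
lemma frob_fixed_iff:
  fixes x :: "'s::prime_card mod_ring alg_closure"
  shows "frob x = x \<longleftrightarrow> x \<in> prime_subfield"
proof
  assume fixed: "frob x = x"
  show "x \<in> prime_subfield"
  proof (rule ccontr)
    assume nx: "x \<notin> prime_subfield"
    define f :: "'s mod_ring alg_closure poly" where "f = monom 1 CARD('s) + - monom 1 1"
    have card2: "CARD('s) \<ge> 2" using prime_card prime_ge_2_nat by blast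
    have deg: "Polynomial.degree f = CARD('s)" unfolding f_def using card2
      by (subst degree_add_eq_left) (simp_all add: degree_monom_eq)
    then have f0: "f \<noteq> 0" using card2 by auto
    have roots: "insert x prime_subfield \<subseteq> {y. poly f y = 0}"
      using fixed frob_prime_subfield unfolding f_def frob_def by (auto simp: poly_monom)
    have "CARD('s) + 1 = card (insert x prime_subfield)"
      using nx unfolding prime_subfield_def by (simp add: card_image inj_to_ac)
    also have "\<dots> \<le> card {y. poly f y = 0}"
      by (rule card_mono[OF poly_roots_finite[OF f0] roots])
    also have "\<dots> \<le> CARD('s)" using card_poly_roots_bound[OF f0] deg by simp
    finally show False by simp
  qed
qed (rule frob_prime_subfield)


lemma frob_zero: "frob 0 = 0"
  by (simp add: frob_def)

lemma frob_power: "frob (x ^ k) = frob x ^ k"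
  unfolding frob_def by (simp only: power_mult[symmetric] mult.commute)

definition frob_mat :: "'s::prime_card mod_ring alg_closure mat \<Rightarrow> 's mod_ring alg_closure mat" where
  "frob_mat = map_mat frob"

lemma frob_mat_mult:
  assumes "A \<in> carrier_mat nr n" "B \<in> carrier_mat n nc"
  shows "frob_mat (A * B) = frob_mat A * frob_mat B"
  unfolding frob_mat_def by (rule semiring_hom.mat_hom_mult[OF frob_hom assms])

lemma frob_mat_one: "frob_mat (1\<^sub>m N) = 1\<^sub>m N"
  unfolding frob_mat_def by (rule semiring_hom.mat_hom_one[OF frob_hom])

lemma trace_frob_fixed:
  fixes A P Q :: "'s::prime_card mod_ring alg_closure mat"
  assumes "A \<in> carrier_mat N N" "P \<in> carrier_mat N N" "Q \<in> carrier_mat N N" "Q * P = 1\<^sub>m N"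
    and entries: "\<forall>i<N. \<forall>j<N. (P * A * Q) $$ (i, j) \<in> prime_subfield"
  shows "frob (mat_trace A) = mat_trace A"
proof -
  have "frob (mat_trace (P * A * Q)) = mat_trace (P * A * Q)"
    using assms(2) entries unfolding mat_trace_def
    by (auto simp: frob_sum frob_fixed_iff intro!: sum.cong)
  then show ?thesis using mat_trace_conj[OF assms(1-4)] by simp
qed

lemma frob_mat_inverse:
  fixes V W S T :: "'s::prime_card mod_ring alg_closure mat"
  assumes carrier: "V \<in> carrier_mat N N" "W \<in> carrier_mat N N" "S \<in> carrier_mat N N"
      "T \<in> carrier_mat N N"
    and inverse: "W * V = 1\<^sub>m N" "V * W = 1\<^sub>m N" "S * T = 1\<^sub>m N"
    and frob_V: "frob_mat V = S * V"
  shows "frob_mat W = W * T"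
proof -
  note assoc = assoc_mult_mat[of _ N N _ N _ N] and mult = mult_carrier_mat[of _ N N _ N]
  have FW: "frob_mat W \<in> carrier_mat N N"
    using carrier by (simp add: frob_mat_def)
  have "frob_mat W * (S * V) = frob_mat (W * V)"
    by (simp add: frob_mat_mult[OF carrier(2,1)] frob_V)
  then have FWSV: "frob_mat W * (S * V) = 1\<^sub>m N"
    by (simp add: inverse(1) frob_mat_one)
  have "frob_mat W * S = frob_mat W * S * (V * W)"
    using carrier FW by (simp add: inverse(2) mult)
  also have "\<dots> = frob_mat W * (S * V) * W"
    using carrier FW by (simp add: assoc mult)
  also have "\<dots> = W"
    using carrier by (simp add: FWSV)
  finally have FWS: "frob_mat W * S = W" .
  have "frob_mat W = frob_mat W * S * T"
    using carrier FW by (simp add: assoc inverse(3))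
  also have "\<dots> = W * T"
    by (simp only: FWS)
  finally show ?thesis .
qed

lemma frob_descent:
  fixes A V W S T :: "'s::prime_card mod_ring alg_closure mat"
  assumes carrier: "A \<in> carrier_mat N N" "V \<in> carrier_mat N N" "W \<in> carrier_mat N N"
      "S \<in> carrier_mat N N" "T \<in> carrier_mat N N"
    and inverse: "W * V = 1\<^sub>m N" "V * W = 1\<^sub>m N" "S * T = 1\<^sub>m N" "T * S = 1\<^sub>m N"
    and frob_V: "frob_mat V = S * V" and frob_A: "frob_mat A = S * A * T"
    and ij: "i < N" "j < N"
  shows "(W * A * V) $$ (i, j) \<in> prime_subfield"
proof -
  note assoc = assoc_mult_mat[of _ N N _ N _ N] and mult = mult_carrier_mat[of _ N N _ N]
  have frob_W: "frob_mat W = W * T"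
    by (rule frob_mat_inverse[OF carrier(2-5) inverse(1-3) frob_V])
  have "frob_mat (W * A * V) = frob_mat W * frob_mat A * frob_mat V"
    by (simp only: frob_mat_mult[OF mult[OF carrier(3,1)] carrier(2)] frob_mat_mult[OF carrier(3,1)])
  also have "\<dots> = W * T * (S * A * T) * (S * V)"
    by (simp only: frob_W frob_A frob_V)
  also have "\<dots> = W * (T * S) * A * (T * S) * V"
    using carrier by (simp add: assoc mult)
  also have "\<dots> = W * A * V"
    using carrier by (simp add: inverse(4))
  finally have "frob_mat (W * A * V) $$ (i, j) = (W * A * V) $$ (i, j)"
    by simp
  then have "frob ((W * A * V) $$ (i, j)) = (W * A * V) $$ (i, j)"
    using carrier ij by (simp add: frob_mat_def)
  then show ?thesis by (simp add: frob_fixed_iff)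
qed


(* The subgroup of (Z/p)^* generated by g^n, for a primitive root g modulo the prime p and
   n dividing p - 1: it consists of the N = (p - 1)/n classes g^(n k), k < N, and it is the
   subgroup of n-th powers. *)
locale primitive_root_subgroup =
  fixes p n g :: nat
  assumes prime_p: "Factorial_Ring.prime p" and n_pos: "n > 0" and p_cong_1: "[p = 1] (mod n)"
    and primitive: "ord p g = p - 1"
begin

definition N :: nat where "N = (p - 1) div n"

lemma p_ge_2: "p \<ge> 2"
  using prime_p prime_ge_2_nat by blast

lemma n_times_N: "n * N = p - 1"
proof -
  have "n dvd p - 1" using p_cong_1 p_ge_2 by (simp add: cong_altdef_nat)
  then show ?thesis unfolding N_def by simp
qed

lemma N_pos: "N > 0"
  using n_times_N p_ge_2 by (cases N) auto

lemma coprime_g: "coprime p g"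
  using primitive p_ge_2 ord_eq_0[of p g] by auto

lemma fermat_g: "[g ^ (p - 1) = 1] (mod p)"
  using ord[of g p] primitive by simp

lemma gpow_mod_N: "[g ^ (n * x) = g ^ (n * (x mod N))] (mod p)"
proof -
  have "n * x = n * (x mod N) + (n * N) * (x div N)"
    by (metis add.commute div_mult_mod_eq distrib_left mult.assoc mult.commute)
  then have "g ^ (n * x) = g ^ (n * (x mod N)) * (g ^ (p - 1)) ^ (x div N)"
    by (simp add: n_times_N power_add power_mult)
  also have "[\<dots> = g ^ (n * (x mod N)) * 1 ^ (x div N)] (mod p)"
    by (intro cong_mult cong_pow fermat_g cong_refl)
  finally show ?thesis by simp
qed

lemma gpow_inj:
  assumes "a < N" "b < N" "g ^ (n * a) mod p = g ^ (n * b) mod p"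
  shows "a = b"
proof -
  have "n * a < p - 1" "n * b < p - 1"
    using assms(1,2) n_pos n_times_N by (metis mult_less_cancel1)+
  moreover have "inj_on (\<lambda>k. g ^ k mod p) {..<p - 1}"
    using inj_power_mod[OF coprime_g] primitive by simp
  ultimately have "n * a = n * b"
    using assms(3) by (auto dest: inj_onD)
  then show ?thesis using n_pos by simp
qed

lemma gpow_cong_1_iff:
  assumes "k < N"
  shows "[g ^ (n * k) = 1] (mod p) \<longleftrightarrow> k = 0"
proof
  assume "[g ^ (n * k) = 1] (mod p)"
  then have "p - 1 dvd n * k" using ord_divides[of g "n * k" p] primitive by simp
  moreover have "n * k < p - 1" using assms n_pos n_times_N by (metis mult_less_cancel1)
  ultimately have "n * k = 0" using nat_dvd_not_less by blast
  then show "k = 0" using n_pos by simp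
qed simp

lemma unit_is_gpow:
  assumes "\<not> p dvd x"
  shows "\<exists>t. [g ^ t = x] (mod p)"
proof -
  have "coprime (x mod p) p"
    using assms prime_p by (simp add: coprime_commute prime_imp_coprime)
  moreover have "0 < x mod p" "x mod p < p"
    using assms p_ge_2 by (auto simp: mod_greater_zero_iff_not_dvd)
  ultimately have "x mod p \<in> totatives p" by (auto simp: totatives_def)
  moreover have "residue_primroot p g"
    using coprime_g primitive p_ge_2 prime_p by (simp add: residue_primroot_def totient_prime)
  ultimately have "x mod p \<in> (\<lambda>i. g ^ i mod p) ` {..<totient p}"
    using residue_primroot_is_generator[of p g] p_ge_2 by (simp add: bij_betw_def)
  then show ?thesis by (auto simp: cong_def)
qed

(* If g^(n k) s = 1 then s = (g^(k (p - 2)))^n is an n-th power modulo p. *)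
lemma nth_power_if_gpow_inverse:
  assumes "[g ^ (n * k) * s = 1] (mod p)"
  shows "\<exists>y::int. [int s = y ^ n] (mod int p)"
proof -
  define h where "h = g ^ (k * (p - 2))"
  obtain q where q: "p = q + 2" using p_ge_2 by (metis add.commute le_Suc_ex)
  have "n * k + k * (p - 2) * n = (p - 1) * (n * k)"
    unfolding q by (simp add: algebra_simps)
  then have "g ^ (n * k) * h ^ n = (g ^ (p - 1)) ^ (n * k)"
    unfolding h_def by (simp only: power_mult[symmetric] power_add[symmetric])
  also have "[\<dots> = 1 ^ (n * k)] (mod p)"
    by (intro cong_pow fermat_g)
  finally have gh: "[g ^ (n * k) * h ^ n = 1] (mod p)"
    by simp
  have "[s = s * (g ^ (n * k) * h ^ n)] (mod p)"
    using cong_sym[OF cong_mult[OF cong_refl[of s] gh]] by simp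
  also have "s * (g ^ (n * k) * h ^ n) = (g ^ (n * k) * s) * h ^ n"
    by (simp add: mult_ac)
  also have "[(g ^ (n * k) * s) * h ^ n = 1 * h ^ n] (mod p)"
    by (intro cong_mult assms cong_refl)
  finally have "[int s = int h ^ n] (mod int p)"
    by (simp flip: cong_int_iff)
  then show ?thesis by blast
qed

lemma gpow_if_nth_power:
  assumes "[int s = y ^ n] (mod int p)" "\<not> p dvd s"
  shows "\<exists>m<N. [s = g ^ (n * m)] (mod p)"
proof -
  define x where "x = nat (y mod int p)"
  have "int x = y mod int p" unfolding x_def using p_ge_2 by simp
  then have "[y = int x] (mod int p)" by (simp add: cong_def)
  then have "[int s = int x ^ n] (mod int p)"
    using assms(1) by (blast intro: cong_trans cong_pow)
  then have s_x: "[s = x ^ n] (mod p)"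
    by (simp flip: cong_int_iff)
  have "\<not> p dvd x"
  proof
    assume "p dvd x"
    then have "p dvd x ^ n" by (rule dvd_trans) (simp add: n_pos)
    then show False using assms(2) s_x by (simp add: cong_dvd_iff)
  qed
  then obtain t where "[g ^ t = x] (mod p)" using unit_is_gpow by blast
  then have "[(g ^ t) ^ n = x ^ n] (mod p)" by (rule cong_pow)
  then have "[s = g ^ (n * t)] (mod p)"
    using cong_trans[OF s_x cong_sym] by (simp add: power_mult[symmetric] mult.commute)
  also have "[g ^ (n * t) = g ^ (n * (t mod N))] (mod p)"
    by (rule gpow_mod_N)
  finally show ?thesis using N_pos by (intro exI[of _ "t mod N"]) auto
qed

end


locale induced_representation = primitive_root_subgroup p n g for p n g +
  fixes \<zeta> :: "'s::prime_card mod_ring alg_closure"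
  assumes p_ne_s: "p \<noteq> CARD('s)" and zeta_pow_p: "\<zeta> ^ p = 1"
    and zeta_primitive: "\<forall>k. 0 < k \<and> k < p \<longrightarrow> \<zeta> ^ k \<noteq> 1"
begin

(* z k = zeta^(g^(n k)) is the eigenvalue of a on the basis vector e_k. *)
definition z :: "nat \<Rightarrow> 's mod_ring alg_closure" where
  "z k = \<zeta> ^ (g ^ (n * k))"

lemma p_pos: "p > 0"
  using p_ge_2 by simp

lemma not_p_dvd_s: "\<not> p dvd CARD('s)"
  using prime_p prime_card p_ne_s primes_dvd_imp_eq by blast

lemma p_nonzero: "(of_nat p :: 's mod_ring alg_closure) \<noteq> 0"
proof
  assume "(of_nat p :: 's mod_ring alg_closure) = 0"
  then have "CHAR('s mod_ring alg_closure) dvd p" by (simp only: of_nat_eq_0_iff_char_dvd)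
  then have "CARD('s) dvd p" by simp
  then show False using prime_p prime_card p_ne_s primes_dvd_imp_eq by metis
qed

lemma ind_rep_eq:
  "ind_rep p n g \<zeta> (i, j) = mat N N (\<lambda>(a, b). if a = (b + j) mod N then z a ^ i else 0)"
  using ind_rep_explicit[of p n g \<zeta> i j] N_pos unfolding N_def z_def by simp

lemma ind_rep_carrier: "ind_rep p n g \<zeta> x \<in> carrier_mat N N"
  by (cases x) (simp add: ind_rep_eq)

lemma z_inj: "inj_on z {..<N}"
proof (rule inj_onI)
  fix a b assume "a \<in> {..<N}" "b \<in> {..<N}" "z a = z b"
  moreover have "g ^ (n * a) mod p = g ^ (n * b) mod p"
    using \<open>z a = z b\<close> primitive_root_pow_eq_iff[OF zeta_pow_p zeta_primitive p_pos]
    unfolding z_def by blast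
  ultimately show "a = b" using gpow_inj by blast
qed

(* Realizability forces the power sums of the eigenvalues to be Frobenius-invariant:
   they are the traces of the matrices of a^i. *)
lemma power_sums_frob_invariant:
  assumes realizable: "realizable_over prime_subfield N (ind_rep p n g \<zeta>) (G_elems p n)"
    and "i < p"
  shows "(\<Sum>a<N. (\<zeta> ^ (g ^ (n * a) * CARD('s))) ^ i) = (\<Sum>a<N. (\<zeta> ^ (g ^ (n * a))) ^ i)"
proof -
  obtain P Q where PQ: "P \<in> carrier_mat N N" "Q \<in> carrier_mat N N" "Q * P = 1\<^sub>m N"
    and entries: "\<forall>x\<in>G_elems p n. \<forall>i<N. \<forall>j<N. (P * ind_rep p n g \<zeta> x * Q) $$ (i, j) \<in> prime_subfield"
    using realizable unfolding realizable_over_def by blast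
  let ?R = "ind_rep p n g \<zeta> (i, 0)"
  have "(i, 0) \<in> G_elems p n"
    using \<open>i < p\<close> N_pos by (simp add: G_elems_def N_def)
  then have "frob (mat_trace ?R) = mat_trace ?R"
    using PQ entries by (intro trace_frob_fixed[of ?R N P Q]) (auto simp: ind_rep_carrier)
  moreover have "mat_trace ?R = (\<Sum>a<N. z a ^ i)"
    by (simp add: mat_trace_def ind_rep_eq)
  moreover have "frob (z a ^ i) = (\<zeta> ^ (g ^ (n * a) * CARD('s))) ^ i" for a
    unfolding frob_def z_def by (simp only: power_mult[symmetric] mult.commute mult.left_commute)
  ultimately show ?thesis by (simp add: frob_sum z_def)
qed

(* Direction (=>): comparing the Fourier coefficients at zeta^(-1) of both sides of the
   invariance, the number of k < N with g^(n k) s = 1 (mod p) equals the number with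
   g^(n k) = 1 (mod p), which is one; so s is the inverse of some g^(n k). *)
lemma realizable_imp_nth_power:
  assumes "realizable_over prime_subfield N (ind_rep p n g \<zeta>) (G_elems p n)"
  shows "\<exists>y::int. [int CARD('s) = y ^ n] (mod int p)"
proof -
  define e where "e c a = g ^ (n * a) * c" for c a
  define count where "count c = card {a \<in> {..<N}. [e c a = 1] (mod p)}" for c
  have fourier: "(\<Sum>i<p. (\<zeta> ^ (p - 1)) ^ i * (\<Sum>a<N. (\<zeta> ^ e c a) ^ i)) = of_nat (count c) * of_nat p"
    for c unfolding count_def
    by (rule primitive_root_fourier_count[OF zeta_pow_p zeta_primitive p_pos]) simp
  have "{a \<in> {..<N}. [e 1 a = 1] (mod p)} = {0}"
    using gpow_cong_1_iff N_pos by (auto simp: e_def)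
  then have count_1: "count 1 = 1" by (simp add: count_def)
  have "of_nat (count CARD('s)) * of_nat p
      = (\<Sum>i<p. (\<zeta> ^ (p - 1)) ^ i * (\<Sum>a<N. (\<zeta> ^ e CARD('s) a) ^ i))"
    by (rule fourier[symmetric])
  also have "\<dots> = (\<Sum>i<p. (\<zeta> ^ (p - 1)) ^ i * (\<Sum>a<N. (\<zeta> ^ e 1 a) ^ i))"
    using power_sums_frob_invariant[OF assms] by (intro sum.cong refl) (simp add: e_def)
  also have "\<dots> = of_nat (count 1) * of_nat p"
    by (rule fourier)
  finally have "of_nat (count CARD('s)) = (1 :: 's mod_ring alg_closure)"
    using count_1 p_nonzero by simp
  then have "count CARD('s) \<noteq> 0"
    by (metis of_nat_0 zero_neq_one)
  then obtain a where "[g ^ (n * a) * CARD('s) = 1] (mod p)"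
    unfolding count_def e_def by (metis (no_types, lifting) Collect_empty_eq card.empty)
  then show ?thesis by (rule nth_power_if_gpow_inverse)
qed

definition shift :: "nat \<Rightarrow> nat \<Rightarrow> nat" where
  "shift m k = (k + m) mod N"

lemma shift_less: "shift m k < N"
  using N_pos by (simp add: shift_def)

lemma shift_inj: "inj_on (shift m) {..<N}"
proof (rule inj_onI)
  fix a b assume "a \<in> {..<N}" "b \<in> {..<N}" "shift m a = shift m b"
  then have "[a + m = b + m] (mod N)" by (simp add: shift_def cong_def)
  then have "[a = b] (mod N)" by (simp only: cong_add_rcancel_nat)
  then show "a = b" using \<open>a \<in> {..<N}\<close> \<open>b \<in> {..<N}\<close> by (simp add: cong_def)
qed

lemma shift_eq_shift_iff:
  assumes "a < N" "b < N"
  shows "shift m a = (shift m b + j) mod N \<longleftrightarrow> a = (b + j) mod N"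
proof -
  have "(shift m b + j) mod N = shift m ((b + j) mod N)"
    unfolding shift_def by (simp add: mod_add_left_eq mod_add_right_eq ac_simps)
  then show ?thesis
    using inj_onD[OF shift_inj[of m], of a "(b + j) mod N"] assms N_pos by auto
qed

lemma frob_z_shift:
  assumes "[CARD('s) = g ^ (n * m)] (mod p)"
  shows "frob (z k) = z (shift m k)"
proof -
  have "[g ^ (n * k) * CARD('s) = g ^ (n * k) * g ^ (n * m)] (mod p)"
    by (intro cong_mult cong_refl assms)
  also have "g ^ (n * k) * g ^ (n * m) = g ^ (n * (k + m))"
    by (simp add: power_add distrib_left)
  also have "[\<dots> = g ^ (n * shift m k)] (mod p)"
    unfolding shift_def by (rule gpow_mod_N)
  finally have "\<zeta> ^ (g ^ (n * k) * CARD('s)) = \<zeta> ^ (g ^ (n * shift m k))"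
    using primitive_root_pow_eq_iff[OF zeta_pow_p zeta_primitive p_pos] by (simp add: cong_def)
  then show ?thesis unfolding frob_def z_def by (simp add: power_mult)
qed

lemma frob_vandermonde:
  assumes "[CARD('s) = g ^ (n * m)] (mod p)"
  shows "frob_mat (mat N N (\<lambda>(k, t). z k ^ t))
       = perm_rows N (shift m) * mat N N (\<lambda>(k, t). z k ^ t)"
  by (subst perm_rows_mult[OF _ shift_less])
    (auto intro!: eq_matI simp: frob_mat_def frob_power frob_z_shift[OF assms] shift_less)

lemma frob_ind_rep:
  assumes "[CARD('s) = g ^ (n * m)] (mod p)"
  shows "frob_mat (ind_rep p n g \<zeta> x) = perm_rows N (shift m) * ind_rep p n g \<zeta> x * perm_cols N (shift m)"
proof -
  obtain i j where x: "x = (i, j)" by (cases x)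
  let ?R = "ind_rep p n g \<zeta> (i, j)"
  have "perm_rows N (shift m) * ?R * perm_cols N (shift m)
      = mat N N (\<lambda>(a, b). ?R $$ (shift m a, shift m b))"
    unfolding perm_rows_mult[OF ind_rep_carrier shift_less]
    by (subst mult_perm_cols) (auto simp: shift_less)
  also have "\<dots> = frob_mat ?R"
    by (rule eq_matI)
      (auto simp: ind_rep_eq frob_mat_def frob_power frob_z_shift[OF assms] frob_zero
        shift_eq_shift_iff shift_less)
  finally show ?thesis unfolding x by simp
qed

(* Direction (<=): if s = g^(n m) (mod p), Galois descent applies to V^-1 (R x) V, where V
   is the Vandermonde matrix of the eigenvalues and S the permutation matrix of the shift. *)
lemma nth_power_imp_realizable:
  assumes "\<exists>y::int. [int CARD('s) = y ^ n] (mod int p)"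
  shows "realizable_over prime_subfield N (ind_rep p n g \<zeta>) (G_elems p n)"
proof -
  obtain m where m: "[CARD('s) = g ^ (n * m)] (mod p)"
    using assms gpow_if_nth_power not_p_dvd_s by blast
  define V where "V = mat N N (\<lambda>(k, t). z k ^ t)"
  have V: "V \<in> carrier_mat N N" by (simp add: V_def)
  obtain W where W: "W \<in> carrier_mat N N" "W * V = 1\<^sub>m N" "V * W = 1\<^sub>m N"
    using vandermonde_invertible[OF z_inj] unfolding V_def by blast
  note shift_perm_inverse = perm_rows_cols_inverse[OF shift_less shift_inj, of m]
  have "(W * ind_rep p n g \<zeta> x * V) $$ (i, j) \<in> prime_subfield" if "i < N" "j < N" for x i j
    by (rule frob_descent[OF ind_rep_carrier V W(1) perm_rows_carrier perm_cols_carrier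
          W(2,3) shift_perm_inverse frob_vandermonde[OF m, folded V_def] frob_ind_rep[OF m] that])
  then show ?thesis
    unfolding realizable_over_def using V W by blast
qed

end


theorem mainTheorem11:
  fixes p s n g :: nat
    and \<zeta> :: "('s::prime_card mod_ring) alg_closure"
  assumes "Factorial_Ring.prime p" and "odd p"
    and "Factorial_Ring.prime s" and "odd s" and "s = CARD('s)"
    and "p \<noteq> s"
    and "n > 0" and "[p = 1] (mod n)"
    and "ord p g = p - 1"
    and "\<zeta> ^ p = 1" and "\<forall>k. 0 < k \<and> k < p \<longrightarrow> \<zeta> ^ k \<noteq> 1"
  shows "realizable_over prime_subfield ((p - 1) div n) (ind_rep p n g \<zeta>) (G_elems p n)
     \<longleftrightarrow> (\<exists>y::int. [int s = y ^ n] (mod int p))"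
proof -
  interpret induced_representation p n g \<zeta>
    using assms by unfold_locales auto
  show ?thesis
    unfolding N_def[symmetric] assms(5)
    using realizable_imp_nth_power nth_power_imp_realizable by blast
qed

end
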